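(* Let $\mathbf F_N:=1-\Xi_N$. For every $P\in\mathcal M_\lambda$ there exists $Q\in\mathcal M_\lambda$ with $P\mathbf F_N=x_NQ$.
   Context: $N\ge2$, $q,s$ indeterminates, $K=\mathbb C(q,s)$. Operators act on the right, composed left to right. $\mathcal H_N(s)$ is generated by $T_1,\dots,T_{N-1}$ with $(T_i+1)(T_i-s)=0$ and the braid relations. $\lambda$ is a partition of $N$ (French convention, rows numbered bottom to top); $\mathrm{Tab}_\lambda$ = reverse standard tableaux (bijective fillings by $1,\dots,N$ strictly decreasing left to right in rows and bottom to top in columns); $\mathrm{CT}_{\mathbb T}[i]$ = column minus row of the cell containing $i$; $\mathbb T^{(i,j)}$ exchanges $i,j$. $V_\lambda$ has basis $\mathrm{Tab}_\lambda$ with right action $\mathbb TT_i=s\mathbb T$ if $i,i+1$ share a row, $-\mathbb T$ if they share a column, and if $i$ is in a higher row than $i+1$, with $m=\mathrm{CT}_{\mathbb T}[i+1]-\mathrm{CT}_{\mathbb T}[i]>0$, $\mathbb TT_i=\frac{s-1}{1-s^m}\mathbb T+\frac{s(1-s^{m+1})(1-s^{m-1})}{(1-s^m)^2}\mathbb T^{(i,i+1)}$; the remaining case is determined by this formula for $\mathbb T^{(i,i+1)}$ and the quadratic relation. $\mathcal M_\lambda=K[x_1,\dots,x_N]\otimes V_\lambda$; with $p^{s_i}$ = $p$ with $x_i,x_{i+1}$ exchanged: $(p\otimes u)\mathbf T_i=(1-s)\frac{x_{i+1}(p-p^{s_i})}{x_i-x_{i+1}}\otimes u+p^{s_i}\otimes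 uT_i$, $(p\otimes u)\mathbf w=p(qx_N,x_1,\dots,x_{N-1})\otimes uT_1\cdots T_{N-1}$, $\mathbf T_i^{-1}=s^{-1}(\mathbf T_i+1-s)$; $x_NQ$ means multiplication of the polynomial part by $x_N$. $\Xi_N=\mathbf T_{N-1}^{-1}\cdots\mathbf T_1^{-1}\mathbf w$. *)

theory Defs
  imports "HOL-Library.Poly_Mapping" "HOL-Computational_Algebra.Polynomial"
          "HOL-Computational_Algebra.Fraction_Field"
begin

text \<open>K = C(q)(s), the field of rational functions in two indeterminates q and s over C.\<close>
type_synonym K = "complex poly fract poly fract"

definition qK :: K where "qK = Fract [: Fract [:0, 1:] 1 :] 1"
definition sK :: K where "sK = Fract [:0, 1:] 1"

text \<open>Polynomials in the variables x_1, x_2, ... : exponent vectors are finitely supported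
  maps nat to nat (index i = variable x_i); polynomials are finitely supported maps
  from exponent vectors to K.\<close>
type_synonym mpoly = "(nat \<Rightarrow>\<^sub>0 nat) \<Rightarrow>\<^sub>0 K"

definition Var :: "nat \<Rightarrow> mpoly" where
  "Var i = Poly_Mapping.single (Poly_Mapping.single i 1) 1"

definition smult_mp :: "K \<Rightarrow> mpoly \<Rightarrow> mpoly" where
  "smult_mp c p = Poly_Mapping.single 0 c * p"

definition in_vars :: "nat \<Rightarrow> mpoly \<Rightarrow> bool" where
  "in_vars N p \<longleftrightarrow> (\<forall>a \<in> Poly_Mapping.keys p. Poly_Mapping.keys a \<subseteq> {1..N})"

definition ren_mon :: "(nat \<Rightarrow> nat) \<Rightarrow> (nat \<Rightarrow>\<^sub>0 nat) \<Rightarrow> (nat \<Rightarrow>\<^sub>0 nat)" where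
  "ren_mon f a = (\<Sum>j \<in> Poly_Mapping.keys a. Poly_Mapping.single (f j) (Poly_Mapping.lookup a j))"

definition swapidx :: "nat \<Rightarrow> nat \<Rightarrow> nat" where
  "swapidx i j = (if j = i then Suc i else if j = Suc i then i else j)"

definition swap_vars :: "nat \<Rightarrow> mpoly \<Rightarrow> mpoly" where
  "swap_vars i p = (\<Sum>a \<in> Poly_Mapping.keys p.
      Poly_Mapping.single (ren_mon (swapidx i) a) (Poly_Mapping.lookup p a))"

definition divdiff :: "nat \<Rightarrow> mpoly \<Rightarrow> mpoly" where
  "divdiff i p = (THE r. r * (Var i - Var (Suc i)) = p - swap_vars i p)"

text \<open>p(q x_N, x_1, ..., x_(N-1)): x_1 maps to q x_N and x_j to x_(j-1) for j >= 2\<close>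
definition shiftidx :: "nat \<Rightarrow> nat \<Rightarrow> nat" where
  "shiftidx N j = (if j = 1 then N else j - 1)"

definition wsubst :: "nat \<Rightarrow> mpoly \<Rightarrow> mpoly" where
  "wsubst N p = (\<Sum>a \<in> Poly_Mapping.keys p.
      Poly_Mapping.single (ren_mon (shiftidx N) a)
        (Poly_Mapping.lookup p a * qK ^ (Poly_Mapping.lookup a 1)))"

text \<open>A partition of N: weakly decreasing list of positive parts summing to N.
  Row r (0-based, bottom to top, French convention) has lam ! r cells.\<close>
definition is_partition :: "nat \<Rightarrow> nat list \<Rightarrow> bool" where
  "is_partition N lam \<longleftrightarrow> sorted_wrt (\<ge>) lam \<and> (\<forall>k \<in> set lam. 0 < k) \<and> sum_list lam = N"

definition cells :: "nat list \<Rightarrow> (nat \<times> nat) set" where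
  "cells lam = {(r, c). r < length lam \<and> c < lam ! r}"

text \<open>A tableau is a list T of cells of length N; the entry i (1 <= i <= N) sits in cell T ! (i-1).\<close>
type_synonym tableau = "(nat \<times> nat) list"

definition cell :: "tableau \<Rightarrow> nat \<Rightarrow> nat \<times> nat" where
  "cell T i = T ! (i - 1)"

definition Tab :: "nat \<Rightarrow> nat list \<Rightarrow> tableau set" where
  "Tab N lam = {T. length T = N \<and> distinct T \<and> set T = cells lam \<and>
     (\<forall>i \<in> {1..N}. \<forall>j \<in> {1..N}.
        (fst (cell T i) = fst (cell T j) \<and> snd (cell T i) < snd (cell T j) \<longrightarrow> j < i) \<and>
        (snd (cell T i) = snd (cell T j) \<and> fst (cell T i) < fst (cell T j) \<longrightarrow> j < i))}"

definition CT :: "tableau \<Rightarrow> nat \<Rightarrow> int" where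
  "CT T i = int (snd (cell T i)) - int (fst (cell T i))"

definition exch :: "tableau \<Rightarrow> nat \<Rightarrow> nat \<Rightarrow> tableau" where
  "exch T i j = T[i - 1 := T ! (j - 1), j - 1 := T ! (i - 1)]"

type_synonym vec = "tableau \<Rightarrow> K"

text \<open>The image T T_i of the basis vector T.  The last case (i in a lower row than i+1)
  is the one forced by the formula for T^{(i,i+1)} together with the quadratic relation.\<close>
definition heckeB :: "nat \<Rightarrow> tableau \<Rightarrow> vec" where
  "heckeB i T =
    (let a = cell T i; b = cell T (Suc i); T' = exch T i (Suc i);
         m = CT T (Suc i) - CT T i; s = sK in
     if fst a = fst b then (\<lambda>U. if U = T then s else 0)
     else if snd a = snd b then (\<lambda>U. if U = T then -1 else 0)
     else if fst b < fst a then
       (\<lambda>U. if U = T then (s - 1) / (1 - s powi m)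
            else if U = T' then s * (1 - s powi (m + 1)) * (1 - s powi (m - 1)) / (1 - s powi m)\<^sup>2
            else 0)
     else
       (\<lambda>U. if U = T then (s - 1) / (1 - s powi m)
            else if U = T' then 1
            else 0))"

definition vact :: "nat \<Rightarrow> nat list \<Rightarrow> nat \<Rightarrow> vec \<Rightarrow> vec" where
  "vact N lam i v = (\<lambda>U. \<Sum>T \<in> Tab N lam. v T * heckeB i T U)"

text \<open>u T_1 T_2 ... T_(N-1) (right action, T_1 applied first)\<close>
definition vchain :: "nat \<Rightarrow> nat list \<Rightarrow> vec \<Rightarrow> vec" where
  "vchain N lam v = fold (vact N lam) [1..<N] v"

definition basis_vec :: "tableau \<Rightarrow> vec" where
  "basis_vec T = (\<lambda>U. if U = T then 1 else 0)"

text \<open>An element is written uniquely as the sum over T in Tab of P T tensor T.\<close>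
type_synonym melt = "tableau \<Rightarrow> mpoly"

definition inM :: "nat \<Rightarrow> nat list \<Rightarrow> melt \<Rightarrow> bool" where
  "inM N lam P \<longleftrightarrow> (\<forall>U. U \<notin> Tab N lam \<longrightarrow> P U = 0) \<and> (\<forall>U. in_vars N (P U))"

definition opT :: "nat \<Rightarrow> nat list \<Rightarrow> nat \<Rightarrow> melt \<Rightarrow> melt" where
  "opT N lam i P = (\<lambda>U. if U \<in> Tab N lam then
       smult_mp (1 - sK) (Var (Suc i) * divdiff i (P U))
       + (\<Sum>T \<in> Tab N lam. smult_mp (heckeB i T U) (swap_vars i (P T)))
     else 0)"

definition opTinv :: "nat \<Rightarrow> nat list \<Rightarrow> nat \<Rightarrow> melt \<Rightarrow> melt" where
  "opTinv N lam i P = (\<lambda>U. smult_mp (inverse sK) (opT N lam i P U + smult_mp (1 - sK) (P U)))"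

definition opW :: "nat \<Rightarrow> nat list \<Rightarrow> melt \<Rightarrow> melt" where
  "opW N lam P = (\<lambda>U. \<Sum>T \<in> Tab N lam.
       smult_mp (vchain N lam (basis_vec T) U) (wsubst N (P T)))"

text \<open>Xi_N = T_(N-1)^{-1} ... T_1^{-1} w, composed left to right (T_(N-1)^{-1} acts first)\<close>
definition opXi :: "nat \<Rightarrow> nat list \<Rightarrow> melt \<Rightarrow> melt" where
  "opXi N lam P = opW N lam (fold (opTinv N lam) (rev [1..<N]) P)"

definition opF :: "nat \<Rightarrow> nat list \<Rightarrow> melt \<Rightarrow> melt" where
  "opF N lam P = (\<lambda>U. P U - opXi N lam P U)"

end

theory Submission
  imports Defs
begin

(* Write P|j for P with x_j := 0. Divisibility by x_N means P|N = 0, so it suffices to show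
   (P Xi_N)|N = P|N. Setting a variable to zero is a ring homomorphism, and
   (x_(i+1) (p - p^(s_i)) / (x_i - x_(i+1)))|i = p^(s_i)|i - p|i; hence (P T_i^-1)|i = (P|(i+1))^(s_i)
   with T_i^-1 acting on V_lambda alone. Iterating, (P T_(N-1)^-1 ... T_1^-1)|1 is P|N with the
   variables shifted cyclically, acted on by T_(N-1)^-1 ... T_1^-1 in V_lambda. Finally (R w)|N only
   depends on R|1: on it the substitution of w undoes the shift (no power of q appears since x_1 is
   absent), and the action T_1 ... T_(N-1) of w on V_lambda cancels the chain of inverses. *)

abbreviation (input) lookup :: "('a \<Rightarrow>\<^sub>0 'b::zero) \<Rightarrow> 'a \<Rightarrow> 'b" where
  "lookup \<equiv> Poly_Mapping.lookup"
abbreviation (input) keys :: "('a \<Rightarrow>\<^sub>0 'b::zero) \<Rightarrow> 'a set" where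
  "keys \<equiv> Poly_Mapping.keys"
abbreviation (input) single :: "'a \<Rightarrow> 'b \<Rightarrow> 'a \<Rightarrow>\<^sub>0 'b::zero" where
  "single \<equiv> Poly_Mapping.single"

lemma lookup_smult_mp [simp]: "lookup (smult_mp c p) a = c * lookup p a"
  unfolding smult_mp_def mult_map_scale_conv_mult[symmetric]
  by (simp add: Poly_Mapping.map.rep_eq when_def)

lemma keys_smult_mp: "keys (smult_mp c p) \<subseteq> keys p"
  by (auto simp: in_keys_iff)

lemma smult_mp_add [simp]: "smult_mp c (p + q) = smult_mp c p + smult_mp c q"
  by (simp add: smult_mp_def algebra_simps)
lemma smult_mp_add_left: "smult_mp (c + d) p = smult_mp c p + smult_mp d p"
  by (simp add: smult_mp_def single_add algebra_simps)
lemma smult_mp_diff [simp]: "smult_mp c (p - q) = smult_mp c p - smult_mp c q"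
  by (simp add: smult_mp_def algebra_simps)
lemma smult_mp_smult_mp [simp]: "smult_mp c (smult_mp d p) = smult_mp (c * d) p"
  by (simp add: smult_mp_def mult_single mult.assoc[symmetric])
lemma smult_mp_0_left [simp]: "smult_mp 0 p = 0" by (simp add: smult_mp_def)
lemma smult_mp_0_right [simp]: "smult_mp c 0 = 0" by (simp add: smult_mp_def)
lemma smult_mp_1 [simp]: "smult_mp 1 p = p" by (simp add: smult_mp_def)
lemma mult_smult_mp_left: "smult_mp c p * q = smult_mp c (p * q)"
  by (simp add: smult_mp_def mult.assoc)
lemma mult_smult_mp_right: "p * smult_mp c q = smult_mp c (p * q)"
  by (simp add: smult_mp_def algebra_simps)
lemma smult_mp_sum: "smult_mp c (sum f S) = (\<Sum>x\<in>S. smult_mp c (f x))"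
  by (simp add: smult_mp_def sum_distrib_left)
lemma smult_mp_sum_left: "smult_mp (sum f S) p = (\<Sum>x\<in>S. smult_mp (f x) p)"
  by (induction S rule: infinite_finite_induct) (auto simp: smult_mp_add_left)
lemma smult_mp_single: "smult_mp c (single a d) = single a (c * d)"
  by (simp add: smult_mp_def mult_single)

lemma smult_mp_sum_delta:
  assumes "finite S" "U \<in> S"
  shows "(\<Sum>T\<in>S. smult_mp (if T = U then a else 0) (Y T)) = smult_mp a (Y U)"
proof -
  have "(\<Sum>T\<in>S. smult_mp (if T = U then a else 0) (Y T))
      = (\<Sum>T\<in>S. if T = U then smult_mp a (Y U) else 0)"
    by (rule sum.cong) auto
  then show ?thesis using assms by simp
qed

definition mon :: "(nat \<Rightarrow>\<^sub>0 nat) \<Rightarrow> mpoly" where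
  "mon a = single a 1"

lemma mon_add: "mon (a + b) = mon a * mon b" by (simp add: mon_def mult_single)
lemma mon_zero: "mon 0 = 1" by (simp add: mon_def)
lemma smult_mp_mon: "smult_mp c (mon a) = single a c"
  by (simp add: mon_def smult_mp_single)
lemma Var_eq_mon: "Var i = mon (single i 1)" by (simp add: Var_def mon_def)

definition lin_ext :: "((nat \<Rightarrow>\<^sub>0 nat) \<Rightarrow> mpoly) \<Rightarrow> mpoly \<Rightarrow> mpoly" where
  "lin_ext g p = (\<Sum>a\<in>keys p. smult_mp (lookup p a) (g a))"

lemma lin_ext_superset:
  assumes "finite S" "keys p \<subseteq> S"
  shows "lin_ext g p = (\<Sum>a\<in>S. smult_mp (lookup p a) (g a))"
  unfolding lin_ext_def
  by (rule sum.mono_neutral_left) (use assms in \<open>auto simp: in_keys_iff\<close>)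

lemma lin_ext_zero [simp]: "lin_ext g 0 = 0" by (simp add: lin_ext_def)

lemma lin_ext_add: "lin_ext g (p + q) = lin_ext g p + lin_ext g q"
proof -
  have S: "finite (keys p \<union> keys q)" by simp
  show ?thesis
    using lin_ext_superset[OF S, of "p + q" g] lin_ext_superset[OF S, of p g]
      lin_ext_superset[OF S, of q g]
    by (simp add: keys_add lookup_add smult_mp_add_left sum.distrib)
qed

lemma lin_ext_smult: "lin_ext g (smult_mp c p) = smult_mp c (lin_ext g p)"
  using lin_ext_superset[of "keys p" "smult_mp c p" g] keys_smult_mp[of c p]
  by (simp add: lin_ext_def smult_mp_sum)

lemma lin_ext_minus: "lin_ext g (- p) = - lin_ext g p"
  using lin_ext_add[of g p "- p"] by (simp add: eq_neg_iff_add_eq_0 add.commute)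

lemma lin_ext_diff: "lin_ext g (p - q) = lin_ext g p - lin_ext g q"
  using lin_ext_add[of g p "- q"] lin_ext_minus[of g q] by simp

lemma lin_ext_sum: "lin_ext g (sum f S) = (\<Sum>x\<in>S. lin_ext g (f x))"
  by (induction S rule: infinite_finite_induct) (auto simp: lin_ext_add)

lemma lin_ext_single: "lin_ext g (single a c) = smult_mp c (g a)"
  by (cases "c = 0") (auto simp: lin_ext_def)

lemma lin_ext_mon: "lin_ext g (mon a) = g a"
  by (simp add: mon_def lin_ext_single)

lemma lin_ext_cong: "(\<And>a. a \<in> keys p \<Longrightarrow> g a = h a) \<Longrightarrow> lin_ext g p = lin_ext h p"
  by (simp add: lin_ext_def)

lemma lin_ext_fun_diff: "lin_ext (\<lambda>a. g a - h a) p = lin_ext g p - lin_ext h p"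
  by (simp add: lin_ext_def sum_subtractf)

lemma lin_ext_fun_mult: "lin_ext (\<lambda>a. r * g a) p = r * lin_ext g p"
  by (simp add: lin_ext_def sum_distrib_left mult_smult_mp_right)

lemma lin_ext_mon_id: "lin_ext mon p = p"
proof (rule poly_mapping_eqI)
  fix k
  have "lookup (lin_ext mon p) k
      = (\<Sum>a\<in>keys p. lookup p a * (1 when a = k))"
    by (simp add: lin_ext_def mon_def lookup_sum lookup_single)
  also have "\<dots> = lookup p k"
    by (cases "k \<in> keys p")
      (auto simp: when_def in_keys_iff if_distrib cong: if_cong)
  finally show "lookup (lin_ext mon p) k = lookup p k" .
qed

lemma lin_ext_lin_ext: "lin_ext g (lin_ext h p) = lin_ext (\<lambda>a. lin_ext g (h a)) p"
  by (simp add: lin_ext_def[of h] lin_ext_sum lin_ext_smult lin_ext_def[of "\<lambda>a. lin_ext g (h a)"])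

lemma lin_ext_mult:
  assumes "\<And>a b. g (a + b) = g a * g b"
  shows "lin_ext g (p * q) = lin_ext g p * lin_ext g q"
proof -
  have expand: "r = (\<Sum>a\<in>keys r. single a (lookup r a))"
    for r :: mpoly
    using lin_ext_mon_id[of r] by (simp add: lin_ext_def smult_mp_mon)
  have pq: "p * q = (\<Sum>a\<in>keys p. \<Sum>b\<in>keys q.
      single (a + b) (lookup p a * lookup q b))"
    by (subst expand[of p], subst expand[of q])
      (simp add: sum_distrib_left sum_distrib_right mult_single sum.swap[of _ "keys q"])
  have "lin_ext g (p * q) = (\<Sum>a\<in>keys p. \<Sum>b\<in>keys q.
      smult_mp (lookup p a * lookup q b) (g a * g b))"
    by (simp add: pq lin_ext_sum lin_ext_single assms)
  also have "\<dots> = lin_ext g p * lin_ext g q"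
    by (simp add: lin_ext_def sum_distrib_left sum_distrib_right mult_smult_mp_left
        mult_smult_mp_right mult.commute sum.swap[of _ "keys q"])
  finally show ?thesis .
qed

lemma keys_lin_ext:
  "keys (lin_ext g p) \<subseteq> (\<Union>a\<in>keys p. keys (g a))"
  unfolding lin_ext_def using keys_sum keys_smult_mp by fastforce

lemma poly_mapping_sum_single:
  "(a :: 'a \<Rightarrow>\<^sub>0 'b::comm_monoid_add)
     = (\<Sum>j\<in>keys a. single j (lookup a j))"
proof (rule poly_mapping_eqI)
  fix k
  show "lookup a k
      = lookup (\<Sum>j\<in>keys a. single j (lookup a j)) k"
    by (cases "k \<in> keys a")
      (auto simp: lookup_sum lookup_single when_def in_keys_iff if_distrib cong: if_cong)
qed

lemma keys_add_exponents: "keys (a + b :: nat \<Rightarrow>\<^sub>0 nat) = keys a \<union> keys b"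
  by (auto simp: in_keys_iff lookup_add)

lemma ren_mon_superset:
  assumes "finite S" "keys a \<subseteq> S"
  shows "ren_mon f a = (\<Sum>j\<in>S. single (f j) (lookup a j))"
  unfolding ren_mon_def
  by (rule sum.mono_neutral_left) (use assms in \<open>auto simp: in_keys_iff\<close>)

lemma ren_mon_zero [simp]: "ren_mon f 0 = 0" by (simp add: ren_mon_def)

lemma ren_mon_add: "ren_mon f (a + b) = ren_mon f a + ren_mon f b"
proof -
  have S: "finite (keys a \<union> keys b)" by simp
  show ?thesis
    using ren_mon_superset[OF S, of "a + b" f] ren_mon_superset[OF S, of a f]
      ren_mon_superset[OF S, of b f]
    by (simp add: keys_add lookup_add single_add sum.distrib)
qed

lemma ren_mon_sum: "ren_mon f (sum g S) = (\<Sum>x\<in>S. ren_mon f (g x))"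
  by (induction S rule: infinite_finite_induct) (auto simp: ren_mon_add)

lemma ren_mon_single [simp]: "ren_mon f (single j n) = single (f j) n"
  by (cases "n = 0") (auto simp: ren_mon_def)

lemma ren_mon_comp: "ren_mon f (ren_mon g a) = ren_mon (f \<circ> g) a"
  by (simp add: ren_mon_def[of g] ren_mon_sum) (simp add: ren_mon_def)

lemma ren_mon_id: "(\<And>j. j \<in> keys a \<Longrightarrow> f j = j) \<Longrightarrow> ren_mon f a = a"
  by (simp add: ren_mon_def poly_mapping_sum_single[of a, symmetric] cong: sum.cong)

lemma lookup_ren_mon_unique:
  assumes "\<And>j. j \<in> keys a \<Longrightarrow> f j = k \<longleftrightarrow> j = j0"
  shows "lookup (ren_mon f a) k = lookup a j0"
proof -
  have "lookup (ren_mon f a) k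
      = (\<Sum>j\<in>keys a. if j = j0 then lookup a j else 0)"
    unfolding ren_mon_def lookup_sum using assms by (intro sum.cong) (auto simp: lookup_single)
  also have "\<dots> = lookup a j0"
    by (cases "j0 \<in> keys a") (auto simp: in_keys_iff)
  finally show ?thesis .
qed

lemma keys_ren_mon: "keys (ren_mon f a) \<subseteq> f ` keys a"
  unfolding ren_mon_def by (rule order_trans[OF keys_sum]) auto

lemma mon_power: "mon (single j n) = Var j ^ n"
proof (induction n)
  case 0 then show ?case by (simp add: mon_zero)
next
  case (Suc n)
  have "single j (Suc n) = single j 1 + single j n"
    by (simp add: single_add[symmetric])
  then show ?case using Suc by (simp add: mon_add Var_eq_mon)
qed

lemma mon_eq_prod_Var: "mon a = (\<Prod>j\<in>keys a. Var j ^ lookup a j)"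
proof -
  have "mon (sum f S) = (\<Prod>x\<in>S. mon (f x))" for f :: "nat \<Rightarrow> nat \<Rightarrow>\<^sub>0 nat" and S
    by (induction S rule: infinite_finite_induct) (auto simp: mon_zero mon_add)
  then show ?thesis by (subst poly_mapping_sum_single[of a]) (simp add: mon_power)
qed

lemma swap_vars_eq_lin_ext: "swap_vars i p = lin_ext (\<lambda>a. mon (ren_mon (swapidx i) a)) p"
  by (simp add: swap_vars_def lin_ext_def smult_mp_single mon_def)

lemma wsubst_eq_lin_ext:
  "wsubst N p = lin_ext (\<lambda>a. single (ren_mon (shiftidx N) a) (qK ^ lookup a 1)) p"
  by (simp add: wsubst_def lin_ext_def smult_mp_single)

lemma swapidx_simps [simp]:
  "swapidx i i = Suc i" "swapidx i (Suc i) = i" "j \<noteq> i \<Longrightarrow> j \<noteq> Suc i \<Longrightarrow> swapidx i j = j"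
  by (auto simp: swapidx_def)

lemma swap_vars_mon: "swap_vars i (mon a) = mon (ren_mon (swapidx i) a)"
  by (simp add: swap_vars_eq_lin_ext lin_ext_mon)

lemma swap_vars_Var: "swap_vars i (Var j) = Var (swapidx i j)"
  by (simp add: swap_vars_mon Var_eq_mon)

lemma swap_vars_mult: "swap_vars i (p * q) = swap_vars i p * swap_vars i q"
  unfolding swap_vars_eq_lin_ext by (rule lin_ext_mult) (simp add: ren_mon_add mon_add)

lemma swap_vars_one [simp]: "swap_vars i 1 = 1"
  using swap_vars_mon[of i 0] by (simp add: mon_zero ren_mon_def)

lemma swap_vars_zero [simp]: "swap_vars i 0 = 0"
  by (simp add: swap_vars_eq_lin_ext)
lemma swap_vars_add: "swap_vars i (p + q) = swap_vars i p + swap_vars i q"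
  by (simp add: swap_vars_eq_lin_ext lin_ext_add)
lemma swap_vars_smult: "swap_vars i (smult_mp c p) = smult_mp c (swap_vars i p)"
  by (simp add: swap_vars_eq_lin_ext lin_ext_smult)
lemma swap_vars_sum: "swap_vars i (sum f S) = (\<Sum>x\<in>S. swap_vars i (f x))"
  by (simp add: swap_vars_eq_lin_ext lin_ext_sum)

lemma wsubst_smult: "wsubst N (smult_mp c p) = smult_mp c (wsubst N p)"
  by (simp add: wsubst_eq_lin_ext lin_ext_smult)
lemma wsubst_sum: "wsubst N (sum f S) = (\<Sum>x\<in>S. wsubst N (f x))"
  by (simp add: wsubst_eq_lin_ext lin_ext_sum)

section \<open>Setting a variable to zero\<close>

definition subst_zero :: "nat \<Rightarrow> mpoly \<Rightarrow> mpoly" where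
  "subst_zero j = lin_ext (\<lambda>a. if lookup a j = 0 then mon a else 0)"

lemma subst_zero_mon: "subst_zero j (mon a) = (if lookup a j = 0 then mon a else 0)"
  by (simp add: subst_zero_def lin_ext_mon)

lemma subst_zero_mult: "subst_zero j (p * q) = subst_zero j p * subst_zero j q"
  unfolding subst_zero_def by (rule lin_ext_mult) (auto simp: lookup_add mon_add)

lemma subst_zero_Var [simp]: "subst_zero j (Var j) = 0"
  by (simp add: Var_eq_mon subst_zero_mon)

lemma subst_zero_Var_other: "k \<noteq> j \<Longrightarrow> subst_zero j (Var k) = Var k"
  by (simp add: Var_eq_mon subst_zero_mon lookup_single)

lemma subst_zero_zero [simp]: "subst_zero j 0 = 0" by (simp add: subst_zero_def)
lemma subst_zero_add: "subst_zero j (p + q) = subst_zero j p + subst_zero j q"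
  by (simp add: subst_zero_def lin_ext_add)
lemma subst_zero_diff: "subst_zero j (p - q) = subst_zero j p - subst_zero j q"
  by (simp add: subst_zero_def lin_ext_diff)
lemma subst_zero_smult: "subst_zero j (smult_mp c p) = smult_mp c (subst_zero j p)"
  by (simp add: subst_zero_def lin_ext_smult)
lemma subst_zero_sum: "subst_zero j (sum f S) = (\<Sum>x\<in>S. subst_zero j (f x))"
  by (simp add: subst_zero_def lin_ext_sum)

lemma subst_zero_swap_vars: "subst_zero i (swap_vars i p) = swap_vars i (subst_zero (Suc i) p)"
proof -
  have swap_eq: "swapidx i j = i \<longleftrightarrow> j = Suc i" for j
    by (auto simp: swapidx_def)
  have "subst_zero i (swap_vars i p) = lin_ext (\<lambda>a. subst_zero i (mon (ren_mon (swapidx i) a))) p"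
    by (simp add: swap_vars_eq_lin_ext subst_zero_def lin_ext_lin_ext)
  also have "\<dots> = lin_ext (\<lambda>a. swap_vars i (if lookup a (Suc i) = 0 then mon a else 0)) p"
    by (rule lin_ext_cong)
      (simp add: subst_zero_mon swap_vars_mon lookup_ren_mon_unique swap_eq)
  also have "\<dots> = swap_vars i (subst_zero (Suc i) p)"
    by (simp only: subst_zero_def swap_vars_eq_lin_ext lin_ext_lin_ext)
  finally show ?thesis .
qed

definition div_Var :: "nat \<Rightarrow> mpoly \<Rightarrow> mpoly" where
  "div_Var j = lin_ext (\<lambda>a. if lookup a j = 0 then 0 else mon (a - single j 1))"

lemma div_Var_zero [simp]: "div_Var j 0 = 0"
  by (simp add: div_Var_def)

lemma Var_mult_div_Var: "Var j * div_Var j p = p - subst_zero j p"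
proof -
  have "Var j * div_Var j p = lin_ext (\<lambda>a. Var j *
      (if lookup a j = 0 then 0 else mon (a - single j 1))) p"
    by (simp add: div_Var_def lin_ext_fun_mult)
  also have "\<dots> = lin_ext (\<lambda>a. mon a - (if lookup a j = 0 then mon a else 0)) p"
  proof (rule lin_ext_cong)
    fix a :: "nat \<Rightarrow>\<^sub>0 nat"
    show "Var j * (if lookup a j = 0 then 0 else mon (a - single j 1)) =
          mon a - (if lookup a j = 0 then mon a else 0)"
    proof (cases "lookup a j = 0")
      case False
      have "single j 1 + (a - single j 1) = a"
        by (rule poly_mapping_eqI)
          (use False in \<open>auto simp: lookup_add lookup_minus lookup_single when_def\<close>)
      then show ?thesis using False by (simp add: Var_eq_mon flip: mon_add)
    qed simp
  qed
  also have "\<dots> = p - subst_zero j p"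
    by (simp add: lin_ext_fun_diff lin_ext_mon_id subst_zero_def)
  finally show ?thesis .
qed

lemma in_vars_keys:
  "in_vars N p \<Longrightarrow> a \<in> keys p \<Longrightarrow> j \<in> keys a \<Longrightarrow> j \<in> {1..N}"
  unfolding in_vars_def by blast

lemma in_vars_mon: "in_vars N (mon a) \<longleftrightarrow> keys a \<subseteq> {1..N}"
  by (simp add: in_vars_def mon_def)

lemma in_vars_lin_ext:
  "(\<And>a. a \<in> keys p \<Longrightarrow> in_vars N (g a)) \<Longrightarrow> in_vars N (lin_ext g p)"
  unfolding in_vars_def using keys_lin_ext[of g p] by blast

lemma in_vars_zero [simp]: "in_vars N 0" by (simp add: in_vars_def)
lemma in_vars_add: "in_vars N p \<Longrightarrow> in_vars N q \<Longrightarrow> in_vars N (p + q)"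
  unfolding in_vars_def using keys_add[of p q] by blast
lemma in_vars_diff: "in_vars N p \<Longrightarrow> in_vars N q \<Longrightarrow> in_vars N (p - q)"
  unfolding in_vars_def using keys_diff[of p q] by blast
lemma in_vars_smult: "in_vars N p \<Longrightarrow> in_vars N (smult_mp c p)"
  unfolding in_vars_def using keys_smult_mp[of c p] by blast
lemma in_vars_sum: "(\<And>x. x \<in> S \<Longrightarrow> in_vars N (f x)) \<Longrightarrow> in_vars N (sum f S)"
  by (induction S rule: infinite_finite_induct) (auto intro: in_vars_add)
lemma in_vars_mult: "in_vars N p \<Longrightarrow> in_vars N q \<Longrightarrow> in_vars N (p * q)"
  unfolding in_vars_def using keys_mult[of p q] by (fastforce simp: keys_add_exponents)
lemma in_vars_Var: "j \<in> {1..N} \<Longrightarrow> in_vars N (Var j)"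
  by (simp add: Var_eq_mon in_vars_mon)

lemma in_vars_swap_vars:
  assumes "1 \<le> i" "i < N" "in_vars N p"
  shows "in_vars N (swap_vars i p)"
  unfolding swap_vars_eq_lin_ext
proof (rule in_vars_lin_ext)
  fix a assume a: "a \<in> keys p"
  have "swapidx i ` keys a \<subseteq> {1..N}"
    using in_vars_keys[OF assms(3) a] assms(1,2) by (auto simp: swapidx_def)
  then show "in_vars N (mon (ren_mon (swapidx i) a))"
    using keys_ren_mon[of "swapidx i" a] by (auto simp: in_vars_mon)
qed

lemma in_vars_wsubst:
  assumes "1 \<le> N" "in_vars N p"
  shows "in_vars N (wsubst N p)"
  unfolding wsubst_eq_lin_ext
proof (rule in_vars_lin_ext)
  fix a assume a: "a \<in> keys p"
  have "shiftidx N ` keys a \<subseteq> {1..N}"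
    using in_vars_keys[OF assms(2) a] assms(1) by (fastforce simp: shiftidx_def)
  then show "in_vars N (single (ren_mon (shiftidx N) a) (qK ^ lookup a 1))"
    using keys_ren_mon[of "shiftidx N" a] by (auto simp: in_vars_def)
qed

lemma in_vars_div_Var: "in_vars N p \<Longrightarrow> in_vars N (div_Var j p)"
  unfolding div_Var_def
proof (rule in_vars_lin_ext)
  fix a assume "in_vars N p" "a \<in> keys p"
  moreover have "keys (a - single j 1) \<subseteq> keys a"
    by (auto simp: in_keys_iff lookup_minus)
  ultimately show "in_vars N (if lookup a j = 0 then 0 else mon (a - single j 1))"
    by (auto simp: in_vars_mon dest: in_vars_keys)
qed

definition restrict_vars :: "nat \<Rightarrow> mpoly \<Rightarrow> mpoly" where
  "restrict_vars N = lin_ext (\<lambda>a. if keys a \<subseteq> {1..N} then mon a else 0)"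

lemma restrict_vars_mult: "restrict_vars N (p * q) = restrict_vars N p * restrict_vars N q"
  unfolding restrict_vars_def
  by (rule lin_ext_mult) (auto simp: keys_add_exponents mon_add)

lemma restrict_vars_id: "in_vars N p \<Longrightarrow> restrict_vars N p = p"
  unfolding restrict_vars_def
  by (subst (2) lin_ext_mon_id[symmetric]) (rule lin_ext_cong, auto simp: in_vars_def)

lemma in_vars_restrict_vars: "in_vars N (restrict_vars N p)"
  unfolding restrict_vars_def by (rule in_vars_lin_ext) (auto simp: in_vars_mon)

section \<open>Divided differences\<close>

lemma Var_diff_nonzero: "Var i - Var (Suc i) \<noteq> 0"
proof
  assume "Var i - Var (Suc i) = 0"
  then have "lookup (Var i - Var (Suc i)) (single i 1) = 0" by simp
  moreover have "single i (1::nat) \<noteq> single (Suc i) 1"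
    by (metis lookup_single_eq lookup_single_not_eq n_not_Suc_n one_neq_zero)
  ultimately show False by (simp add: Var_def lookup_minus lookup_single)
qed

definition swap_diff_divisible :: "nat \<Rightarrow> mpoly \<Rightarrow> bool" where
  "swap_diff_divisible i p \<longleftrightarrow> (\<exists>r. r * (Var i - Var (Suc i)) = p - swap_vars i p)"

lemma swap_diff_divisible_add:
  assumes "swap_diff_divisible i p" "swap_diff_divisible i q"
  shows "swap_diff_divisible i (p + q)"
proof -
  from assms obtain r1 r2 where "r1 * (Var i - Var (Suc i)) = p - swap_vars i p"
    "r2 * (Var i - Var (Suc i)) = q - swap_vars i q"
    unfolding swap_diff_divisible_def by blast
  then have "(r1 + r2) * (Var i - Var (Suc i)) = (p + q) - swap_vars i (p + q)"
    by (simp add: swap_vars_add distrib_right)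
  then show ?thesis unfolding swap_diff_divisible_def by blast
qed

lemma swap_diff_divisible_smult:
  assumes "swap_diff_divisible i p"
  shows "swap_diff_divisible i (smult_mp c p)"
proof -
  from assms obtain r where "r * (Var i - Var (Suc i)) = p - swap_vars i p"
    unfolding swap_diff_divisible_def by blast
  then have "smult_mp c r * (Var i - Var (Suc i)) = smult_mp c p - swap_vars i (smult_mp c p)"
    by (simp add: mult_smult_mp_left swap_vars_smult)
  then show ?thesis unfolding swap_diff_divisible_def by blast
qed

text \<open>Leibniz rule: \<open>pq - (pq)\<^sup>s = (p - p\<^sup>s) q + p\<^sup>s (q - q\<^sup>s)\<close>.\<close>

lemma swap_diff_divisible_mult:
  assumes "swap_diff_divisible i p" "swap_diff_divisible i q"
  shows "swap_diff_divisible i (p * q)"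
proof -
  from assms obtain r1 r2 where r1: "r1 * (Var i - Var (Suc i)) = p - swap_vars i p"
    and r2: "r2 * (Var i - Var (Suc i)) = q - swap_vars i q"
    unfolding swap_diff_divisible_def by blast
  have "(r1 * q + swap_vars i p * r2) * (Var i - Var (Suc i))
      = (r1 * (Var i - Var (Suc i))) * q + swap_vars i p * (r2 * (Var i - Var (Suc i)))"
    by (simp add: algebra_simps)
  also have "\<dots> = p * q - swap_vars i p * swap_vars i q"
    unfolding r1 r2 by (simp add: algebra_simps)
  finally have "(r1 * q + swap_vars i p * r2) * (Var i - Var (Suc i)) = p * q - swap_vars i (p * q)"
    by (simp add: swap_vars_mult)
  then show ?thesis unfolding swap_diff_divisible_def by blast
qed

lemma swap_diff_divisible_Var: "swap_diff_divisible i (Var j)"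
  unfolding swap_diff_divisible_def
proof (cases "j = i \<or> j = Suc i")
  case True
  then show "\<exists>r. r * (Var i - Var (Suc i)) = Var j - swap_vars i (Var j)"
    by (auto simp: swap_vars_Var intro: exI[of _ 1] exI[of _ "-1"])
qed (auto simp: swap_vars_Var intro: exI[of _ 0])

lemma swap_diff_divisible_all: "swap_diff_divisible i p"
proof -
  have zero: "swap_diff_divisible i 0" and one: "swap_diff_divisible i 1"
    unfolding swap_diff_divisible_def by (auto intro: exI[of _ 0])
  have power: "swap_diff_divisible i (Var j ^ n)" for j n
    by (induction n) (simp_all add: one swap_diff_divisible_mult swap_diff_divisible_Var)
  have "swap_diff_divisible i (\<Prod>j\<in>S. Var j ^ e j)" for S e
    by (induction S rule: infinite_finite_induct) (simp_all add: one swap_diff_divisible_mult power)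
  then have "swap_diff_divisible i (smult_mp c (mon a))" for a c
    by (simp add: mon_eq_prod_Var swap_diff_divisible_smult)
  then have "swap_diff_divisible i (\<Sum>a\<in>S. smult_mp (lookup p a) (mon a))" for S
    by (induction S rule: infinite_finite_induct) (simp_all add: zero swap_diff_divisible_add)
  then show ?thesis
    using lin_ext_mon_id[of p] unfolding lin_ext_def by metis
qed

lemma divdiff_mult: "divdiff i p * (Var i - Var (Suc i)) = p - swap_vars i p"
proof -
  obtain r where r: "r * (Var i - Var (Suc i)) = p - swap_vars i p"
    using swap_diff_divisible_all[of i p] unfolding swap_diff_divisible_def by blast
  moreover have "r' = r" if "r' * (Var i - Var (Suc i)) = p - swap_vars i p" for r'
    using that r Var_diff_nonzero mult_right_cancel by metis
  ultimately have "\<exists>!r. r * (Var i - Var (Suc i)) = p - swap_vars i p"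
    by blast
  then show ?thesis unfolding divdiff_def by (rule theI')
qed

lemma in_vars_divdiff:
  assumes "1 \<le> i" "i < N" "in_vars N p"
  shows "in_vars N (divdiff i p)"
proof -
  let ?d = "Var i - Var (Suc i)"
  have d: "restrict_vars N ?d = ?d"
    using assms by (intro restrict_vars_id in_vars_diff in_vars_Var) auto
  have "in_vars N (p - swap_vars i p)"
    using assms by (intro in_vars_diff in_vars_swap_vars)
  then have "restrict_vars N (divdiff i p * ?d) = divdiff i p * ?d"
    by (simp add: divdiff_mult restrict_vars_id)
  then have "restrict_vars N (divdiff i p) * ?d = divdiff i p * ?d"
    by (simp add: restrict_vars_mult d)
  then have "restrict_vars N (divdiff i p) = divdiff i p"
    using Var_diff_nonzero mult_right_cancel by blast
  then show ?thesis using in_vars_restrict_vars by metis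
qed

lemma subst_zero_Var_mult_divdiff:
  "subst_zero i (Var (Suc i) * divdiff i p) = subst_zero i (swap_vars i p) - subst_zero i p"
proof -
  have "subst_zero i (divdiff i p * (Var i - Var (Suc i))) = subst_zero i (p - swap_vars i p)"
    by (simp add: divdiff_mult)
  then have "subst_zero i (divdiff i p) * (- Var (Suc i)) = subst_zero i p - subst_zero i (swap_vars i p)"
    by (simp add: subst_zero_mult subst_zero_diff subst_zero_Var_other)
  then show ?thesis by (simp add: subst_zero_mult subst_zero_Var_other algebra_simps)
qed

section \<open>Reverse standard tableaux\<close>

lemma TabD:
  assumes "T \<in> Tab N lam"
  shows "length T = N" "distinct T" "set T = cells lam"
    "\<And>i j. i \<in> {1..N} \<Longrightarrow> j \<in> {1..N} \<Longrightarrow> fst (cell T i) = fst (cell T j) \<Longrightarrow>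
       snd (cell T i) < snd (cell T j) \<Longrightarrow> j < i"
    "\<And>i j. i \<in> {1..N} \<Longrightarrow> j \<in> {1..N} \<Longrightarrow> snd (cell T i) = snd (cell T j) \<Longrightarrow>
       fst (cell T i) < fst (cell T j) \<Longrightarrow> j < i"
  using assms unfolding Tab_def by auto

lemma finite_cells: "finite (cells lam)"
proof -
  have "cells lam \<subseteq> {..<length lam} \<times> {..<Max (set lam \<union> {0})}"
  proof
    fix x assume "x \<in> cells lam"
    then obtain r c where x: "x = (r, c)" "r < length lam" "c < lam ! r" by (auto simp: cells_def)
    have "lam ! r \<le> Max (set lam \<union> {0})" using x by (intro Max_ge) auto
    then have "c < Max (set lam \<union> {0})" using x(3) by linarith
    then show "x \<in> {..<length lam} \<times> {..<Max (set lam \<union> {0})}" using x(1,2) by blast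
  qed
  then show ?thesis by (rule finite_subset) auto
qed

lemma finite_Tab: "finite (Tab N lam)"
proof -
  have "Tab N lam \<subseteq> {xs. set xs \<subseteq> cells lam \<and> length xs = N}" by (auto simp: Tab_def)
  then show ?thesis using finite_lists_length_eq[OF finite_cells] finite_subset by blast
qed

lemma cell_exch:
  assumes "length T = N" "1 \<le> i" "i < N" "p \<in> {1..N}"
  shows "cell (exch T i (Suc i)) p = cell T (swapidx i p)"
  using assms by (auto simp: cell_def exch_def swapidx_def nth_list_update)

lemma exch_exch:
  assumes "length T = N" "1 \<le> i" "i < N"
  shows "exch (exch T i (Suc i)) i (Suc i) = T"
  using assms by (auto simp: exch_def nth_list_update list_update_swap intro!: nth_equalityI)

lemma cell_in_cells: "T \<in> Tab N lam \<Longrightarrow> p \<in> {1..N} \<Longrightarrow> cell T p \<in> cells lam"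
  using TabD(1,3) by (force simp: cell_def)

lemma cell_surj:
  assumes "T \<in> Tab N lam" "x \<in> cells lam"
  obtains v where "v \<in> {1..N}" "cell T v = x"
proof -
  have "x \<in> set T" using TabD(3)[OF assms(1)] assms(2) by auto
  then obtain k where "k < length T" "T ! k = x" by (auto simp: in_set_conv_nth)
  then show ?thesis using TabD(1)[OF assms(1)] by (intro that[of "Suc k"]) (auto simp: cell_def)
qed

context
  fixes N lam i T
  assumes T: "T \<in> Tab N lam" and i: "1 \<le> i" "i < N"
begin

lemma cell_exch_i: "cell (exch T i (Suc i)) i = cell T (Suc i)"
  using cell_exch[OF TabD(1)[OF T] i, of i] i by simp

lemma cell_exch_Suc_i: "cell (exch T i (Suc i)) (Suc i) = cell T i"
  using cell_exch[OF TabD(1)[OF T] i, of "Suc i"] i by simp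

lemma exch_neq:
  assumes "fst (cell T i) \<noteq> fst (cell T (Suc i))"
  shows "exch T i (Suc i) \<noteq> T"
  using assms cell_exch_i by auto

text \<open>No entry lies strictly between \<open>i\<close> and \<open>i+1\<close>, so exchanging them can only break the
  monotonicity of a row or column that contains both.\<close>

lemma exch_in_Tab:
  assumes nr: "fst (cell T i) \<noteq> fst (cell T (Suc i))" and nc: "snd (cell T i) \<noteq> snd (cell T (Suc i))"
  shows "exch T i (Suc i) \<in> Tab N lam"
proof -
  note D = TabD[OF T]
  let ?T' = "exch T i (Suc i)"
  have ce: "cell ?T' p = cell T (swapidx i p)" if "p \<in> {1..N}" for p
    using cell_exch[OF D(1) i that] .
  have sw: "swapidx i p \<in> {1..N}" if "p \<in> {1..N}" for p
    using that i by (auto simp: swapidx_def)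
  have ord: "q < p" if "p \<in> {1..N}" "q \<in> {1..N}" "swapidx i q < swapidx i p"
     "\<not> ((p = i \<and> q = Suc i) \<or> (p = Suc i \<and> q = i))" for p q
    using that by (auto simp: swapidx_def split: if_splits)
  have apart: "\<not> ((p = i \<and> q = Suc i) \<or> (p = Suc i \<and> q = i))"
    if "p \<in> {1..N}" "q \<in> {1..N}"
      "fst (cell ?T' p) = fst (cell ?T' q) \<or> snd (cell ?T' p) = snd (cell ?T' q)" for p q
    using that nr nc ce by (auto simp: swapidx_def)
  show ?thesis
    unfolding Tab_def
  proof (intro CollectI conjI ballI impI)
    show "length ?T' = N" "distinct ?T'" "set ?T' = cells lam"
      using D i by (simp_all add: exch_def)
  next
    fix p q assume pq: "p \<in> {1..N}" "q \<in> {1..N}"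
    {
      assume h: "fst (cell ?T' p) = fst (cell ?T' q) \<and> snd (cell ?T' p) < snd (cell ?T' q)"
      then have "swapidx i q < swapidx i p" using D(4)[OF sw[OF pq(1)] sw[OF pq(2)]] ce pq by auto
      then show "q < p" using ord apart pq h by blast
    }
    {
      assume h: "snd (cell ?T' p) = snd (cell ?T' q) \<and> fst (cell ?T' p) < fst (cell ?T' q)"
      then have "swapidx i q < swapidx i p" using D(5)[OF sw[OF pq(1)] sw[OF pq(2)]] ce pq by auto
      then show "q < p" using ord apart pq h by blast
    }
  qed
qed

text \<open>Equal contents on different rows would force an entry strictly between \<open>i\<close> and \<open>i+1\<close>, at
  the corner of the rectangle spanned by their cells.\<close>

lemma CT_neq:
  assumes nr: "fst (cell T i) \<noteq> fst (cell T (Suc i))" and nc: "snd (cell T i) \<noteq> snd (cell T (Suc i))"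
  shows "CT T (Suc i) \<noteq> CT T i"
proof
  assume eq: "CT T (Suc i) = CT T i"
  note D = TabD[OF T]
  have iN: "i \<in> {1..N}" "Suc i \<in> {1..N}" using i by auto
  obtain ra ca where a: "cell T i = (ra, ca)" by fastforce
  obtain rb cb where b: "cell T (Suc i) = (rb, cb)" by fastforce
  have ca: "(ra, ca) \<in> cells lam" and cb: "(rb, cb) \<in> cells lam"
    using cell_in_cells[OF T] iN a b by metis+
  have e: "int cb - int rb = int ca - int ra" using eq a b by (simp add: CT_def)
  show False
  proof (cases "ra < rb")
    case True
    then have "ca < cb" using e by linarith
    then have "(rb, ca) \<in> cells lam" using cb by (auto simp: cells_def)
    then obtain v where v: "v \<in> {1..N}" "cell T v = (rb, ca)" using cell_surj[OF T] by blast
    have "Suc i < v" using D(4)[OF v(1) iN(2)] v b \<open>ca < cb\<close> by auto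
    moreover have "v < i" using D(5)[OF iN(1) v(1)] v a True by auto
    ultimately show False by simp
  next
    case False
    then have "rb < ra" using nr a b by auto
    then have "cb < ca" using e by linarith
    then have "(ra, cb) \<in> cells lam" using ca by (auto simp: cells_def)
    then obtain v where v: "v \<in> {1..N}" "cell T v = (ra, cb)" using cell_surj[OF T] by blast
    have "i < v" using D(4)[OF v(1) iN(1)] v a \<open>cb < ca\<close> by auto
    moreover have "v < Suc i" using D(5)[OF iN(2) v(1)] v b \<open>rb < ra\<close> by auto
    ultimately show False by simp
  qed
qed

lemma CT_exch: "CT (exch T i (Suc i)) (Suc i) - CT (exch T i (Suc i)) i = - (CT T (Suc i) - CT T i)"
  by (simp add: CT_def cell_exch_i cell_exch_Suc_i)

end

section \<open>The Hecke action on \<open>V\<^sub>\<lambda>\<close>\<close>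

lemma sK_power: "sK ^ n = Fract ([:0, 1:] ^ n) 1"
  by (induction n) (auto simp: sK_def One_fract_def)

lemma sK_power_neq_1: "n > 0 \<Longrightarrow> sK ^ n \<noteq> 1"
proof
  assume n: "n > 0" and "sK ^ n = 1"
  then have "([:0, 1:] :: complex poly fract poly) ^ n = 1"
    by (simp add: sK_power One_fract_def eq_fract)
  then have "degree (([:0, 1:] :: complex poly fract poly) ^ n) = 0" by simp
  then show False using n by (simp add: degree_power_eq)
qed

lemma sK_nonzero: "sK \<noteq> 0"
proof
  assume "sK = 0"
  then have "Fract ([:0, 1:] :: complex poly fract poly) 1 = Fract 0 1"
    by (simp add: sK_def Zero_fract_def)
  then show False by (simp add: eq_fract)
qed

lemma sK_power_int_neq_1: "m \<noteq> 0 \<Longrightarrow> sK powi m \<noteq> 1"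
  using sK_power_neq_1[of "nat m"] sK_power_neq_1[of "nat (- m)"]
  by (cases "m > 0") (auto simp: power_int_def power_inverse)

definition hecke_diag :: "int \<Rightarrow> K" where
  "hecke_diag m = (sK - 1) / (1 - sK powi m)"

definition hecke_offdiag :: "int \<Rightarrow> K" where
  "hecke_offdiag m = sK * (1 - sK powi (m + 1)) * (1 - sK powi (m - 1)) / (1 - sK powi m)\<^sup>2"

lemma inverse_frac_identity:
  fixes s x :: "'a::field"
  assumes "x \<noteq> 0" "x \<noteq> 1"
  shows "(s - 1) / (1 - x) + (s - 1) / (1 - inverse x) = s - 1"
proof -
  define d where "d = 1 - x"
  have d: "d \<noteq> 0" using assms by (simp add: d_def)
  have x: "x = 1 - d" by (simp add: d_def)
  have "1 - d \<noteq> 0" using assms x by simp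
  then show ?thesis unfolding x using d by (simp add: field_simps)
qed

lemma quadratic_frac_identity:
  fixes s x :: "'a::field"
  assumes "s \<noteq> 0" "x \<noteq> 0" "x \<noteq> 1"
  shows "((s - 1) / (1 - x)) * ((s - 1) / (1 - x)) + s * (1 - x * s) * (1 - x / s) / (1 - x)\<^sup>2
     = (s - 1) * ((s - 1) / (1 - x)) + s"
proof -
  define d where "d = 1 - x"
  have d: "d \<noteq> 0" using assms by (simp add: d_def)
  have x: "x = 1 - d" by (simp add: d_def)
  have e: "s * (1 - x * s) * (1 - x / s) = (1 - x * s) * (s - x)"
    using assms by (simp add: field_simps)
  show ?thesis unfolding e unfolding x using d by (simp add: field_simps power2_eq_square)
qed

lemma hecke_diag_add_neg: "m \<noteq> 0 \<Longrightarrow> hecke_diag m + hecke_diag (- m) = sK - 1"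
  unfolding hecke_diag_def power_int_minus
  using inverse_frac_identity sK_nonzero sK_power_int_neq_1 by (metis power_int_eq_0_iff)

lemma hecke_diag_quadratic:
  assumes "m \<noteq> 0"
  shows "hecke_diag m * hecke_diag m + hecke_offdiag m = (sK - 1) * hecke_diag m + sK"
proof -
  have off: "hecke_offdiag m = sK * (1 - sK powi m * sK) * (1 - sK powi m / sK) / (1 - sK powi m)\<^sup>2"
    unfolding hecke_offdiag_def using sK_nonzero by (simp add: power_int_add_1 power_int_diff)
  show ?thesis
    unfolding hecke_diag_def off
    by (rule quadratic_frac_identity) (simp_all add: sK_nonzero sK_power_int_neq_1 assms)
qed

lemma hecke_diag_quadratic_neg:
  assumes "m \<noteq> 0"
  shows "hecke_diag m * hecke_diag m + hecke_offdiag (- m) = (sK - 1) * hecke_diag m + sK"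
proof -
  have a: "hecke_diag m = sK - 1 - hecke_diag (- m)"
    using hecke_diag_add_neg[OF assms] by (simp add: algebra_simps)
  show ?thesis
    using hecke_diag_quadratic[of "- m"] assms unfolding a by (simp add: algebra_simps)
qed

lemma heckeB_same_row:
  "fst (cell T i) = fst (cell T (Suc i)) \<Longrightarrow> heckeB i T = (\<lambda>U. if U = T then sK else 0)"
  by (simp add: heckeB_def Let_def)

lemma heckeB_same_col:
  "fst (cell T i) \<noteq> fst (cell T (Suc i)) \<Longrightarrow> snd (cell T i) = snd (cell T (Suc i)) \<Longrightarrow>
   heckeB i T = (\<lambda>U. if U = T then -1 else 0)"
  by (simp add: heckeB_def Let_def)

lemma heckeB_higher:
  "fst (cell T (Suc i)) < fst (cell T i) \<Longrightarrow> snd (cell T i) \<noteq> snd (cell T (Suc i)) \<Longrightarrow>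
   heckeB i T = (\<lambda>U. if U = T then hecke_diag (CT T (Suc i) - CT T i)
      else if U = exch T i (Suc i) then hecke_offdiag (CT T (Suc i) - CT T i) else 0)"
  unfolding heckeB_def Let_def hecke_diag_def hecke_offdiag_def by (rule ext) simp

lemma heckeB_lower:
  "fst (cell T i) < fst (cell T (Suc i)) \<Longrightarrow> snd (cell T i) \<noteq> snd (cell T (Suc i)) \<Longrightarrow>
   heckeB i T = (\<lambda>U. if U = T then hecke_diag (CT T (Suc i) - CT T i)
      else if U = exch T i (Suc i) then 1 else 0)"
  unfolding heckeB_def Let_def hecke_diag_def by (rule ext) simp

lemma sum_if_eq_mult:
  assumes "finite S" "T \<in> S" "T' \<in> S" "T \<noteq> T'"
  shows "(\<Sum>W\<in>S. (if W = T then a else if W = T' then b else 0) * f W) = a * f T + b * (f T' :: K)"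
proof -
  have "(\<Sum>W\<in>S. (if W = T then a else if W = T' then b else 0) * f W)
      = (\<Sum>W\<in>S. if W = T then a * f T else 0) + (\<Sum>W\<in>S. if W = T' then b * f T' else 0)"
    by (subst sum.distrib[symmetric]) (rule sum.cong, use assms in auto)
  then show ?thesis using assms by simp
qed

text \<open>On the span of \<open>T\<close> and \<open>T' = T\<^sup>(\<^sup>i\<^sup>,\<^sup>i\<^sup>+\<^sup>1\<^sup>)\<close> the operator \<open>T\<^sub>i\<close> is a \<open>2\<times>2\<close> matrix; these two
  conditions on its entries give the quadratic relation.\<close>

lemma quadratic_2x2:
  fixes a b a' b' :: K
  assumes "T \<noteq> T'" "a + a' = sK - 1" "a * a + b * b' = (sK - 1) * a + sK"
  shows "a * (if U = T then a else if U = T' then b else 0)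
       + b * (if U = T' then a' else if U = T then b' else 0)
     = (sK - 1) * (if U = T then a else if U = T' then b else 0) + sK * (if T = U then 1 else 0)"
proof -
  have "a * b + b * a' = (sK - 1) * b" using assms(2) by (metis distrib_left mult.commute)
  then show ?thesis using assms(1,3) by auto
qed

context
  fixes N lam i T
  assumes T: "T \<in> Tab N lam" and i: "1 \<le> i" "i < N"
begin

lemma heckeB_quadratic:
  "(\<Sum>W\<in>Tab N lam. heckeB i T W * heckeB i W U) = (sK - 1) * heckeB i T U + sK * (if T = U then 1 else 0)"
proof -
  let ?T' = "exch T i (Suc i)"
  let ?m = "CT T (Suc i) - CT T i"
  have delta: "(\<Sum>W\<in>Tab N lam. (if W = T then c else 0) * f W) = c * (f T :: K)" for c f
  proof -
    have "(\<Sum>W\<in>Tab N lam. (if W = T then c else 0) * f W)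
        = (\<Sum>W\<in>Tab N lam. if W = T then c * f T else 0)"
      by (rule sum.cong) auto
    then show ?thesis using finite_Tab T by simp
  qed
  consider (row) "fst (cell T i) = fst (cell T (Suc i))"
    | (col) "fst (cell T i) \<noteq> fst (cell T (Suc i))" "snd (cell T i) = snd (cell T (Suc i))"
    | (higher) "fst (cell T (Suc i)) < fst (cell T i)" "snd (cell T i) \<noteq> snd (cell T (Suc i))"
    | (lower) "fst (cell T i) < fst (cell T (Suc i))" "snd (cell T i) \<noteq> snd (cell T (Suc i))"
    by (meson linorder_neqE_nat)
  then show ?thesis
  proof cases
    case row
    then show ?thesis by (simp only: heckeB_same_row[OF row] delta) (simp add: algebra_simps)
  next
    case col
    then show ?thesis by (simp only: heckeB_same_col[OF col] delta) (simp add: algebra_simps)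
  next
    case higher
    have nr: "fst (cell T i) \<noteq> fst (cell T (Suc i))" using higher by simp
    have T'_lower: "fst (cell ?T' i) < fst (cell ?T' (Suc i))" "snd (cell ?T' i) \<noteq> snd (cell ?T' (Suc i))"
      using higher by (auto simp: cell_exch_i[OF T i] cell_exch_Suc_i[OF T i])
    have m: "?m \<noteq> 0" using CT_neq[OF T i nr higher(2)] by simp
    show ?thesis
      unfolding heckeB_higher[OF higher]
      unfolding sum_if_eq_mult[OF finite_Tab T exch_in_Tab[OF T i nr higher(2)]
          exch_neq[OF T i nr, symmetric]]
      unfolding heckeB_higher[OF higher] heckeB_lower[OF T'_lower] CT_exch[OF T i]
        exch_exch[OF TabD(1)[OF T] i]
      using exch_neq[OF T i nr] hecke_diag_add_neg[OF m] hecke_diag_quadratic[OF m]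
      by (intro quadratic_2x2) simp_all
  next
    case lower
    have nr: "fst (cell T i) \<noteq> fst (cell T (Suc i))" using lower by simp
    have T'_higher: "fst (cell ?T' (Suc i)) < fst (cell ?T' i)" "snd (cell ?T' i) \<noteq> snd (cell ?T' (Suc i))"
      using lower by (auto simp: cell_exch_i[OF T i] cell_exch_Suc_i[OF T i])
    have m: "?m \<noteq> 0" using CT_neq[OF T i nr lower(2)] by simp
    show ?thesis
      unfolding heckeB_lower[OF lower]
      unfolding sum_if_eq_mult[OF finite_Tab T exch_in_Tab[OF T i nr lower(2)]
          exch_neq[OF T i nr, symmetric]]
      unfolding heckeB_lower[OF lower] heckeB_higher[OF T'_higher] CT_exch[OF T i]
        exch_exch[OF TabD(1)[OF T] i]
      using exch_neq[OF T i nr] hecke_diag_add_neg[OF m] hecke_diag_quadratic_neg[OF m]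
      by (intro quadratic_2x2) simp_all
  qed
qed

lemma heckeB_outside_Tab: "U \<notin> Tab N lam \<Longrightarrow> heckeB i T U = 0"
proof -
  assume U: "U \<notin> Tab N lam"
  then have "U \<noteq> T" using T by auto
  moreover have "U \<noteq> exch T i (Suc i)"
    if "fst (cell T i) \<noteq> fst (cell T (Suc i))" "snd (cell T i) \<noteq> snd (cell T (Suc i))"
    using exch_in_Tab[OF T i that] U by auto
  ultimately show ?thesis by (auto simp: heckeB_def Let_def)
qed

end

definition in_V :: "nat \<Rightarrow> nat list \<Rightarrow> vec \<Rightarrow> bool" where
  "in_V N lam v \<longleftrightarrow> (\<forall>U. U \<notin> Tab N lam \<longrightarrow> v U = 0)"

definition heckeB_inv :: "nat \<Rightarrow> tableau \<Rightarrow> vec" where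
  "heckeB_inv i T U = inverse sK * (heckeB i T U + (1 - sK) * basis_vec T U)"

definition vact_inv :: "nat \<Rightarrow> nat list \<Rightarrow> nat \<Rightarrow> vec \<Rightarrow> vec" where
  "vact_inv N lam i v = (\<lambda>U. \<Sum>T\<in>Tab N lam. v T * heckeB_inv i T U)"

lemma in_V_basis_vec: "T \<in> Tab N lam \<Longrightarrow> in_V N lam (basis_vec T)"
  unfolding in_V_def basis_vec_def by auto

lemma in_V_vact: "1 \<le> i \<Longrightarrow> i < N \<Longrightarrow> in_V N lam (vact N lam i v)"
  unfolding in_V_def vact_def by (auto intro!: sum.neutral simp: heckeB_outside_Tab)

lemma in_V_vact_inv: "1 \<le> i \<Longrightarrow> i < N \<Longrightarrow> in_V N lam (vact_inv N lam i v)"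
  unfolding in_V_def vact_inv_def heckeB_inv_def basis_vec_def
  by (auto intro!: sum.neutral simp: heckeB_outside_Tab)

lemma sum_mult_basis_vec: "in_V N lam v \<Longrightarrow> (\<Sum>T\<in>Tab N lam. v T * basis_vec T U) = v U"
  by (cases "U \<in> Tab N lam") (auto simp: basis_vec_def in_V_def finite_Tab if_distrib cong: if_cong)

lemma sum_basis_vec_mult:
  assumes "T \<in> Tab N lam"
  shows "(\<Sum>W\<in>Tab N lam. basis_vec T W * f W) = (f T :: K)"
proof -
  have "(\<Sum>W\<in>Tab N lam. basis_vec T W * f W) = (\<Sum>W\<in>Tab N lam. if W = T then f T else 0)"
    by (rule sum.cong) (auto simp: basis_vec_def)
  then show ?thesis using assms finite_Tab by simp
qed

lemma heckeB_inv_mult_heckeB: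
  assumes "T \<in> Tab N lam" "1 \<le> i" "i < N"
  shows "(\<Sum>W\<in>Tab N lam. heckeB_inv i T W * heckeB i W U) = basis_vec T U"
proof -
  let ?S = "Tab N lam"
  have "(\<Sum>W\<in>?S. heckeB_inv i T W * heckeB i W U)
      = (\<Sum>W\<in>?S. inverse sK * (heckeB i T W * heckeB i W U)
          + inverse sK * (1 - sK) * (basis_vec T W * heckeB i W U))"
    by (rule sum.cong) (simp_all add: heckeB_inv_def algebra_simps)
  also have "\<dots> = inverse sK * (\<Sum>W\<in>?S. heckeB i T W * heckeB i W U)
      + inverse sK * (1 - sK) * (\<Sum>W\<in>?S. basis_vec T W * heckeB i W U)"
    by (simp add: sum.distrib sum_distrib_left)
  also have "(\<Sum>W\<in>?S. basis_vec T W * heckeB i W U) = heckeB i T U"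
    by (rule sum_basis_vec_mult[OF assms(1)])
  also have "(\<Sum>W\<in>?S. heckeB i T W * heckeB i W U) = (sK - 1) * heckeB i T U + sK * basis_vec T U"
    using heckeB_quadratic[OF assms] by (simp add: basis_vec_def eq_commute[of T])
  also have "inverse sK * \<dots> + inverse sK * (1 - sK) * heckeB i T U = basis_vec T U"
    using sK_nonzero by (simp add: field_simps)
  finally show ?thesis .
qed

lemma vact_vact_inv:
  assumes "in_V N lam v" "1 \<le> i" "i < N"
  shows "vact N lam i (vact_inv N lam i v) = v"
proof
  fix U
  let ?S = "Tab N lam"
  have "vact N lam i (vact_inv N lam i v) U = (\<Sum>W\<in>?S. \<Sum>T\<in>?S. v T * (heckeB_inv i T W * heckeB i W U))"
    by (simp add: vact_def vact_inv_def sum_distrib_right mult.assoc)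
  also have "\<dots> = (\<Sum>T\<in>?S. v T * (\<Sum>W\<in>?S. heckeB_inv i T W * heckeB i W U))"
    by (subst sum.swap) (simp only: sum_distrib_left)
  also have "\<dots> = (\<Sum>T\<in>?S. v T * basis_vec T U)"
    using assms(2,3) by (simp add: heckeB_inv_mult_heckeB)
  also have "\<dots> = v U" by (rule sum_mult_basis_vec[OF assms(1)])
  finally show "vact N lam i (vact_inv N lam i v) U = v U" .
qed

lemma in_V_fold_vact_inv:
  "in_V N lam v \<Longrightarrow> \<forall>x\<in>set xs. 1 \<le> x \<and> x < N \<Longrightarrow> in_V N lam (fold (vact_inv N lam) xs v)"
  by (induction xs arbitrary: v) (auto simp: in_V_vact_inv)

lemma vact_inv_chain_cancel:
  assumes "1 \<le> k" "k \<le> N" "in_V N lam v"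
  shows "fold (vact N lam) [k..<N] (fold (vact_inv N lam) (rev [k..<N]) v) = v"
  using assms(2,1)
proof (induction k rule: inc_induct)
  case (step n)
  have "in_V N lam (fold (vact_inv N lam) (rev [Suc n..<N]) v)"
    using assms(3) by (intro in_V_fold_vact_inv) auto
  then show ?case using step by (simp add: upt_conv_Cons vact_vact_inv)
qed simp

lemma vact_sum:
  "vact N lam i (\<lambda>U. \<Sum>T\<in>S. c T * w T U) = (\<lambda>U. \<Sum>T\<in>S. c T * vact N lam i (w T) U)"
proof
  fix U
  have "vact N lam i (\<lambda>U. \<Sum>T\<in>S. c T * w T U) U
      = (\<Sum>W\<in>Tab N lam. \<Sum>T\<in>S. c T * (w T W * heckeB i W U))"
    by (simp add: vact_def sum_distrib_right mult.assoc)
  also have "\<dots> = (\<Sum>T\<in>S. c T * vact N lam i (w T) U)"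
    by (subst sum.swap) (simp only: vact_def sum_distrib_left)
  finally show "vact N lam i (\<lambda>U. \<Sum>T\<in>S. c T * w T U) U = (\<Sum>T\<in>S. c T * vact N lam i (w T) U)" .
qed

lemma fold_vact_sum:
  "fold (vact N lam) xs (\<lambda>U. \<Sum>T\<in>S. c T * w T U) = (\<lambda>U. \<Sum>T\<in>S. c T * fold (vact N lam) xs (w T) U)"
  by (induction xs arbitrary: w) (simp_all add: vact_sum)

lemma vchain_eq_sum:
  assumes "in_V N lam v"
  shows "vchain N lam v U = (\<Sum>T\<in>Tab N lam. v T * vchain N lam (basis_vec T) U)"
proof -
  have "vchain N lam v = fold (vact N lam) [1..<N] (\<lambda>U. \<Sum>T\<in>Tab N lam. v T * basis_vec T U)"
    unfolding vchain_def using sum_mult_basis_vec[OF assms] by simp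
  then show ?thesis by (simp add: fold_vact_sum vchain_def)
qed

lemma in_V_vchain:
  assumes "2 \<le> N"
  shows "in_V N lam (vchain N lam v)"
proof -
  have "[1..<N] = [1..<N - 1] @ [N - 1]"
    using upt_Suc_append[of 1 "N - 1"] assms by simp
  then show ?thesis unfolding vchain_def using assms by (simp add: in_V_vact)
qed

section \<open>Setting \<open>x\<^sub>N\<close> to zero commutes with \<open>\<Xi>\<^sub>N\<close>\<close>

lemma opTinv_inM:
  assumes P: "inM N lam P" and i: "1 \<le> i" "i < N"
  shows "inM N lam (opTinv N lam i P)"
proof -
  have "in_vars N (P U)" for U using P by (simp add: inM_def)
  then have "in_vars N (opT N lam i P U)" for U
    unfolding opT_def using i
    by (auto intro!: in_vars_add in_vars_smult in_vars_mult in_vars_Var in_vars_divdiff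
        in_vars_sum in_vars_swap_vars)
  moreover have "opT N lam i P U = 0" if "U \<notin> Tab N lam" for U
    using that by (simp add: opT_def)
  ultimately show ?thesis
    using P unfolding inM_def opTinv_def by (auto intro!: in_vars_smult in_vars_add)
qed

lemma subst_zero_opTinv:
  assumes "U \<in> Tab N lam"
  shows "subst_zero i (opTinv N lam i P U) =
    (\<Sum>T\<in>Tab N lam. smult_mp (heckeB_inv i T U) (swap_vars i (subst_zero (Suc i) (P T))))"
proof -
  let ?X = "\<lambda>T. swap_vars i (subst_zero (Suc i) (P T))"
  let ?S = "\<Sum>T\<in>Tab N lam. smult_mp (heckeB i T U) (?X T)"
  have "subst_zero i (opT N lam i P U) = smult_mp (1 - sK) (?X U - subst_zero i (P U)) + ?S"
    using assms by (simp add: opT_def subst_zero_add subst_zero_smult subst_zero_sum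
        subst_zero_Var_mult_divdiff subst_zero_swap_vars)
  then have "subst_zero i (opTinv N lam i P U) = smult_mp (inverse sK)
      (smult_mp (1 - sK) (?X U - subst_zero i (P U)) + ?S + smult_mp (1 - sK) (subst_zero i (P U)))"
    by (simp add: opTinv_def subst_zero_smult subst_zero_add)
  also have "\<dots> = smult_mp (inverse sK) (?S + smult_mp (1 - sK) (?X U))"
    by (simp add: algebra_simps)
  also have "\<dots> = (\<Sum>T\<in>Tab N lam. smult_mp (heckeB_inv i T U) (?X T))"
  proof -
    have "(\<Sum>T\<in>Tab N lam. smult_mp (heckeB_inv i T U) (?X T))
       = smult_mp (inverse sK) (?S + (\<Sum>T\<in>Tab N lam. smult_mp (if T = U then 1 - sK else 0) (?X T)))"
      by (simp add: heckeB_inv_def basis_vec_def smult_mp_sum sum.distrib smult_mp_add_left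
          flip: smult_mp_smult_mp) (rule sum.cong, auto)
    then show ?thesis using smult_mp_sum_delta[OF finite_Tab assms] by simp
  qed
  finally show ?thesis .
qed

definition opTinv_chain :: "nat \<Rightarrow> nat list \<Rightarrow> nat \<Rightarrow> melt \<Rightarrow> melt" where
  "opTinv_chain N lam k P = fold (opTinv N lam) (rev [k..<N]) P"

definition vact_inv_chain :: "nat \<Rightarrow> nat list \<Rightarrow> nat \<Rightarrow> vec \<Rightarrow> vec" where
  "vact_inv_chain N lam k v = fold (vact_inv N lam) (rev [k..<N]) v"

definition swap_chain :: "nat \<Rightarrow> nat \<Rightarrow> mpoly \<Rightarrow> mpoly" where
  "swap_chain N k p = fold swap_vars (rev [k..<N]) p"

lemma opTinv_chain_inM:
  assumes "inM N lam P" "1 \<le> k"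
  shows "inM N lam (opTinv_chain N lam k P)"
proof -
  have "inM N lam (fold (opTinv N lam) xs P)" if "\<forall>x\<in>set xs. 1 \<le> x \<and> x < N" for xs
    using that assms(1) by (induction xs arbitrary: P) (auto simp: opTinv_inM)
  then show ?thesis unfolding opTinv_chain_def using assms(2) by simp
qed

lemma subst_zero_opTinv_chain:
  assumes P: "inM N lam P" and k: "1 \<le> k" "k \<le> N"
  shows "\<forall>U\<in>Tab N lam. subst_zero k (opTinv_chain N lam k P U) =
     (\<Sum>T\<in>Tab N lam. smult_mp (vact_inv_chain N lam k (basis_vec T) U) (swap_chain N k (subst_zero N (P T))))"
  using k(2,1)
proof (induction k rule: inc_induct)
  case base
  have "subst_zero N (P U) = (\<Sum>T\<in>Tab N lam. smult_mp (basis_vec T U) (subst_zero N (P T)))"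
    if "U \<in> Tab N lam" for U
    using smult_mp_sum_delta[OF finite_Tab that, of 1 "\<lambda>T. subst_zero N (P T)"]
    by (simp add: basis_vec_def eq_commute[of _ U])
  then show ?case by (simp add: opTinv_chain_def vact_inv_chain_def swap_chain_def)
next
  case (step n)
  let ?S = "Tab N lam"
  let ?C = "\<lambda>T. vact_inv_chain N lam (Suc n) (basis_vec T)"
  let ?Y = "\<lambda>T. swap_chain N (Suc n) (subst_zero N (P T))"
  have R: "opTinv_chain N lam n P = opTinv N lam n (opTinv_chain N lam (Suc n) P)"
    and C: "vact_inv_chain N lam n v = vact_inv N lam n (vact_inv_chain N lam (Suc n) v)"
    and Y: "swap_chain N n p = swap_vars n (swap_chain N (Suc n) p)" for v p
    using step by (simp_all add: opTinv_chain_def vact_inv_chain_def swap_chain_def upt_conv_Cons)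
  have "subst_zero n (opTinv_chain N lam n P U)
      = (\<Sum>T\<in>?S. smult_mp (vact_inv_chain N lam n (basis_vec T) U) (swap_chain N n (subst_zero N (P T))))"
    if U: "U \<in> ?S" for U
  proof -
    have "subst_zero n (opTinv_chain N lam n P U)
        = (\<Sum>W\<in>?S. smult_mp (heckeB_inv n W U) (swap_vars n (\<Sum>T\<in>?S. smult_mp (?C T W) (?Y T))))"
      unfolding R subst_zero_opTinv[OF U] using step by (intro sum.cong) auto
    also have "\<dots> = (\<Sum>W\<in>?S. \<Sum>T\<in>?S. smult_mp (?C T W * heckeB_inv n W U) (swap_vars n (?Y T)))"
      by (simp add: swap_vars_sum swap_vars_smult smult_mp_sum mult.commute)
    also have "\<dots> = (\<Sum>T\<in>?S. smult_mp (\<Sum>W\<in>?S. ?C T W * heckeB_inv n W U) (swap_vars n (?Y T)))"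
      by (subst sum.swap) (simp add: smult_mp_sum_left)
    also have "\<dots> = (\<Sum>T\<in>?S. smult_mp (vact_inv_chain N lam n (basis_vec T) U) (swap_chain N n (subst_zero N (P T))))"
      by (simp add: C Y vact_inv_def)
    finally show ?thesis .
  qed
  then show ?case by blast
qed

text \<open>The index permutation \<open>s\<^sub>k \<circ> \<dots> \<circ> s\<^sub>N\<^sub>-\<^sub>1\<close> realised by \<open>swap_chain N k\<close>.\<close>

definition cycle_idx :: "nat \<Rightarrow> nat \<Rightarrow> nat \<Rightarrow> nat" where
  "cycle_idx N k j = (if j = N then k else if k \<le> j \<and> j < N then Suc j else j)"

lemma swap_chain_eq_lin_ext:
  assumes "k \<le> N"
  shows "swap_chain N k p = lin_ext (\<lambda>a. mon (ren_mon (cycle_idx N k) a)) p"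
  using assms
proof (induction k rule: inc_induct)
  case base
  have "cycle_idx N N = id" by (auto simp: cycle_idx_def)
  then show ?case by (simp add: swap_chain_def ren_mon_id lin_ext_mon_id)
next
  case (step n)
  have "swapidx n \<circ> cycle_idx N (Suc n) = cycle_idx N n"
    using step(2) by (auto simp: cycle_idx_def swapidx_def)
  moreover have "swap_chain N n p = swap_vars n (swap_chain N (Suc n) p)"
    using step(2) by (simp add: swap_chain_def upt_conv_Cons)
  ultimately show ?case
    by (simp add: step.IH swap_vars_eq_lin_ext[of n "lin_ext _ _"] lin_ext_lin_ext lin_ext_mon ren_mon_comp)
qed

text \<open>On polynomials free of \<open>x\<^sub>N\<close> the substitution of \<open>w\<close> inverts \<open>s\<^sub>1 \<circ> \<dots> \<circ> s\<^sub>N\<^sub>-\<^sub>1\<close>; the factor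
  \<open>q\<close> attached to powers of \<open>x\<^sub>1\<close> does not appear because \<open>x\<^sub>1\<close> comes from \<open>x\<^sub>N\<close>.\<close>

lemma wsubst_swap_chain_subst_zero:
  assumes "1 \<le> N" "in_vars N p"
  shows "wsubst N (swap_chain N 1 (subst_zero N p)) = subst_zero N p"
proof -
  let ?z = "\<lambda>a. if lookup a N = 0 then mon a else 0"
  have "wsubst N (swap_chain N 1 (subst_zero N p)) = lin_ext (\<lambda>a. wsubst N (swap_chain N 1 (?z a))) p"
    using assms(1)
    by (simp only: subst_zero_def swap_chain_eq_lin_ext wsubst_eq_lin_ext lin_ext_lin_ext)
  also have "\<dots> = lin_ext ?z p"
  proof (rule lin_ext_cong)
    fix a assume a: "a \<in> keys p"
    have cyc: "1 \<le> j" "cycle_idx N 1 j = (if j = N then 1 else Suc j)" "shiftidx N (cycle_idx N 1 j) = j"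
      if "j \<in> keys a" for j
      using in_vars_keys[OF assms(2) a that] by (auto simp: cycle_idx_def shiftidx_def)
    have "ren_mon (shiftidx N) (ren_mon (cycle_idx N 1) a) = a"
      unfolding ren_mon_comp by (rule ren_mon_id) (use cyc in auto)
    moreover have "lookup (ren_mon (cycle_idx N 1) a) 1 = lookup a N"
    proof (rule lookup_ren_mon_unique)
      fix j assume j: "j \<in> keys a"
      show "cycle_idx N 1 j = 1 \<longleftrightarrow> j = N" using cyc(1,2)[OF j] by auto
    qed
    ultimately show "wsubst N (swap_chain N 1 (?z a)) = ?z a"
      using assms(1) by (simp add: swap_chain_eq_lin_ext wsubst_eq_lin_ext lin_ext_mon) (simp add: mon_def)
  qed
  also have "\<dots> = subst_zero N p" by (simp add: subst_zero_def)
  finally show ?thesis .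
qed

lemma subst_zero_wsubst:
  assumes "in_vars N p"
  shows "subst_zero N (wsubst N p) = wsubst N (subst_zero 1 p)"
proof -
  have "subst_zero N (wsubst N p) = lin_ext (\<lambda>a. subst_zero N
      (single (ren_mon (shiftidx N) a) (qK ^ lookup a 1))) p"
    by (simp only: subst_zero_def wsubst_eq_lin_ext lin_ext_lin_ext)
  also have "\<dots> = lin_ext (\<lambda>a. wsubst N (if lookup a 1 = 0 then mon a else 0)) p"
  proof (rule lin_ext_cong)
    fix a assume a: "a \<in> keys p"
    have "lookup (ren_mon (shiftidx N) a) N = lookup a 1"
      by (rule lookup_ren_mon_unique) (use in_vars_keys[OF assms a] in \<open>force simp: shiftidx_def\<close>)
    then show "subst_zero N (single (ren_mon (shiftidx N) a) (qK ^ lookup a 1)) =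
        wsubst N (if lookup a 1 = 0 then mon a else 0)"
      by (simp add: subst_zero_def lin_ext_single wsubst_eq_lin_ext lin_ext_mon smult_mp_mon)
  qed
  also have "\<dots> = wsubst N (subst_zero 1 p)"
    by (simp only: subst_zero_def wsubst_eq_lin_ext lin_ext_lin_ext)
  finally show ?thesis .
qed

lemma wsubst_subst_zero_opTinv_chain:
  assumes N: "1 \<le> N" and P: "inM N lam P" and T: "T \<in> Tab N lam"
  shows "wsubst N (subst_zero 1 (opTinv_chain N lam 1 P T))
    = (\<Sum>T'\<in>Tab N lam. smult_mp (vact_inv_chain N lam 1 (basis_vec T') T) (subst_zero N (P T')))"
proof -
  have "in_vars N (P T')" for T' using P by (simp add: inM_def)
  moreover have "subst_zero 1 (opTinv_chain N lam 1 P T) = (\<Sum>T'\<in>Tab N lam.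
      smult_mp (vact_inv_chain N lam 1 (basis_vec T') T) (swap_chain N 1 (subst_zero N (P T'))))"
    using subst_zero_opTinv_chain[OF P order.refl N] T by blast
  ultimately show ?thesis
    by (simp only: wsubst_sum wsubst_smult wsubst_swap_chain_subst_zero[OF N])
qed

lemma subst_zero_opXi:
  assumes N: "1 \<le> N" and P: "inM N lam P" and U: "U \<in> Tab N lam"
  shows "subst_zero N (opXi N lam P U) = subst_zero N (P U)"
proof -
  let ?S = "Tab N lam"
  let ?R = "opTinv_chain N lam 1 P"
  let ?C = "\<lambda>T'. vact_inv_chain N lam 1 (basis_vec T')"
  have "in_vars N (?R T)" for T
    using opTinv_chain_inM[OF P order.refl] by (simp add: inM_def)
  then have "subst_zero N (opXi N lam P U)
      = (\<Sum>T\<in>?S. smult_mp (vchain N lam (basis_vec T) U) (wsubst N (subst_zero 1 (?R T))))"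
    by (simp add: opXi_def opW_def opTinv_chain_def subst_zero_sum subst_zero_smult subst_zero_wsubst)
  also have "\<dots> = (\<Sum>T\<in>?S. \<Sum>T'\<in>?S.
      smult_mp (?C T' T * vchain N lam (basis_vec T) U) (subst_zero N (P T')))"
    by (intro sum.cong refl)
      (simp only: wsubst_subst_zero_opTinv_chain[OF N P] smult_mp_sum smult_mp_smult_mp mult.commute)
  also have "\<dots> = (\<Sum>T'\<in>?S. smult_mp (vchain N lam (?C T') U) (subst_zero N (P T')))"
  proof (subst sum.swap, intro sum.cong refl)
    fix T' assume "T' \<in> ?S"
    then have "in_V N lam (?C T')"
      unfolding vact_inv_chain_def by (intro in_V_fold_vact_inv in_V_basis_vec) auto
    then show "(\<Sum>T\<in>?S. smult_mp (?C T' T * vchain N lam (basis_vec T) U) (subst_zero N (P T')))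
        = smult_mp (vchain N lam (?C T') U) (subst_zero N (P T'))"
      by (simp add: vchain_eq_sum smult_mp_sum_left)
  qed
  also have "\<dots> = (\<Sum>T'\<in>?S. smult_mp (basis_vec T' U) (subst_zero N (P T')))"
    using N vact_inv_chain_cancel[OF order.refl N in_V_basis_vec]
    by (intro sum.cong refl) (simp add: vchain_def vact_inv_chain_def)
  also have "\<dots> = subst_zero N (P U)"
    using smult_mp_sum_delta[OF finite_Tab U, of 1 "\<lambda>T. subst_zero N (P T)"]
    by (simp add: basis_vec_def eq_commute[of _ U])
  finally show ?thesis .
qed

lemma inM_opF:
  assumes N: "2 \<le> N" and P: "inM N lam P"
  shows "inM N lam (opF N lam P)"
proof -
  have R: "in_vars N (opTinv_chain N lam 1 P T)" for T
    using opTinv_chain_inM[OF P order.refl] by (simp add: inM_def)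
  have "in_vars N (opXi N lam P U)" for U
    using N R unfolding opXi_def opW_def opTinv_chain_def[symmetric]
    by (auto intro!: in_vars_sum in_vars_smult in_vars_wsubst)
  moreover have "opXi N lam P U = 0" if "U \<notin> Tab N lam" for U
    using in_V_vchain[OF N] that by (simp add: opXi_def opW_def in_V_def)
  ultimately show ?thesis
    using P unfolding inM_def opF_def by (auto intro: in_vars_diff)
qed

lemma subst_zero_opF:
  assumes N: "2 \<le> N" and P: "inM N lam P"
  shows "subst_zero N (opF N lam P U) = 0"
proof (cases "U \<in> Tab N lam")
  case True
  then show ?thesis using N by (simp add: opF_def subst_zero_diff subst_zero_opXi[OF _ P])
next
  case False
  then show ?thesis using inM_opF[OF assms] by (simp add: inM_def)
qed

theorem proposition3p3:
  fixes N :: nat and lam :: "nat list" and P :: melt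
  assumes "N \<ge> 2"
    and "is_partition N lam"
    and "inM N lam P"
  shows "\<exists>Q. inM N lam Q \<and> opF N lam P = (\<lambda>U. Var N * Q U)"
proof (intro exI conjI)
  let ?Q = "\<lambda>U. div_Var N (opF N lam P U)"
  have "inM N lam (opF N lam P)" using inM_opF[OF assms(1,3)] .
  then show "inM N lam ?Q"
    by (simp add: inM_def in_vars_div_Var)
  show "opF N lam P = (\<lambda>U. Var N * ?Q U)"
    by (simp add: Var_mult_div_Var subst_zero_opF[OF assms(1,3)])
qed

end
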